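(* Let $Z=x\frac{\partial}{\partial x}+\sum_{k=1}^n\big(\mathcal{A}y+G(x,y)\big)_k\frac{\partial}{\partial y_k}$ be a polynomial vector field on $\mathbb{C}^{n+1}$, where $\mathcal{A}\in\mathfrak{gl}(n,\mathbb{C})$ and $G$ is a polynomial map whose components lie in the ideal $(y_1,\dots,y_n)^2$. Suppose there are $\delta_0,\delta_1,\epsilon>0$ with $$(-\delta_1+\epsilon)|y|^2<\operatorname{Re}\langle\mathcal{A}y,y\rangle<(-\delta_0-\epsilon)|y|^2\quad\text{for all }y\in\mathbb{C}^n\setminus\{0\}.$$ For $x_0\in\widehat{\mathbb{D}}(2)$ and $y_0\in\mathbb{C}^n$, let $w(t)=(x_0^{1-t},y(t))$ be the solution of $w'=-\log(x_0)\,Z(w)$, $w(0)=(x_0,y_0)$, and when it is defined on $[0,1]$ set $f_{x_0}(y_0)=y(1)$. Then there exist $r,c_0,c_1>0$ such that for every $x\in\widehat{\mathbb{D}}(2)$ the map $f_x$ is defined on $\{|y|<r\}$ and $$c_1|x|^{\delta_1}|u-v|\le|f_x(u)-f_x(v)|\le c_0|x|^{\delta_0}|u-v|$$ for all $x\in\widehat{\mathbb{D}}(2)$ and $|u|,|v|<r$.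
   Context: $\widehat{\mathbb{D}}(2)=\{x\in\mathbb{C}\setminus(-\infty,0]:|x|<2\}$. $\log$ is the principal determination of the logarithm and $x_0^{1-t}=\exp((1-t)\log x_0)$. $\langle\cdot,\cdot\rangle$ is the standard Hermitian inner product and $|\cdot|$ the Euclidean norm. *)

theory Defs
  imports "HOL-Analysis.Analysis"
begin

definition slit_disc2 :: "complex set" where
  "slit_disc2 = {x. \<not> (Im x = 0 \<and> Re x \<le> 0) \<and> cmod x < 2}"

definition herm :: "complex^'n \<Rightarrow> complex^'n \<Rightarrow> complex" where
  "herm u v = (\<Sum>k\<in>UNIV. u $ k * cnj (v $ k))"

text \<open>G is a polynomial map C x C^n -> C^n (in the variables x, y_1..y_n) each of whose
  components lies in the ideal (y_1,...,y_n)^2: a finite linear combination of monomials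
  x^a y^alpha with total y-degree |alpha| >= 2.\<close>
definition poly_map_sq_ideal :: "(complex \<Rightarrow> complex^'n \<Rightarrow> complex^'n) \<Rightarrow> bool" where
  "poly_map_sq_ideal G \<longleftrightarrow>
     (\<forall>k. \<exists>S c. finite (S :: (nat \<times> ('n \<Rightarrow> nat)) set)
        \<and> (\<forall>(a, \<alpha>)\<in>S. (\<Sum>i\<in>UNIV. \<alpha> i) \<ge> 2)
        \<and> (\<forall>x y. G x y $ k =
             (\<Sum>(a, \<alpha>)\<in>S. c (a, \<alpha>) * x ^ a * (\<Prod>i\<in>UNIV. (y $ i) ^ (\<alpha> i)))))"

text \<open>y is the y-component on [0,1] of the solution w(t) = (x0^(1-t), y(t)) of
  w' = - log(x0) Z(w), w(0) = (x0, y0), with Z = x d/dx + sum_k (A y + G(x,y))_k d/dy_k.\<close>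
definition is_flow_sol ::
  "complex^'n^'n \<Rightarrow> (complex \<Rightarrow> complex^'n \<Rightarrow> complex^'n) \<Rightarrow> complex \<Rightarrow> complex^'n
     \<Rightarrow> (real \<Rightarrow> complex^'n) \<Rightarrow> bool" where
  "is_flow_sol A G x0 y0 y \<longleftrightarrow> y 0 = y0 \<and>
     (\<forall>t\<in>{0..1}. (y has_vector_derivative
         ((- Ln x0) *s (A *v y t + G (exp (complex_of_real (1 - t) * Ln x0)) (y t))))
       (at t within {0..1}))"

definition flow_defined ::
  "complex^'n^'n \<Rightarrow> (complex \<Rightarrow> complex^'n \<Rightarrow> complex^'n) \<Rightarrow> complex \<Rightarrow> complex^'n \<Rightarrow> bool" where
  "flow_defined A G x0 y0 \<longleftrightarrow> (\<exists>y. is_flow_sol A G x0 y0 y)"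

text \<open>f_{x0}(y0) = y(1) (the solution is unique when it exists).\<close>
definition flow_map ::
  "complex^'n^'n \<Rightarrow> (complex \<Rightarrow> complex^'n \<Rightarrow> complex^'n) \<Rightarrow> complex \<Rightarrow> complex^'n \<Rightarrow> complex^'n" where
  "flow_map A G x0 y0 = (THE z. \<exists>y. is_flow_sol A G x0 y0 y \<and> y 1 = z)"

end

theory Submission
  imports Defs
begin

text \<open>
  On a small ball \<open>G\<close> is \<open>\<epsilon>\<close>-Lipschitz, so for the difference \<open>d\<close> of two solutions the cone
  condition on \<open>A\<close> keeps \<open>Re \<langle>A d + \<Delta>G, d\<rangle>\<close> between \<open>- \<delta>1 |d|\<^sup>2\<close> and \<open>- \<delta>0 |d|\<^sup>2\<close>.
  Multiplying by \<open>- Ln x\<close>, whose real part is \<open>- ln |x|\<close> and whose imaginary part is at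
  most \<open>\<pi>\<close> in modulus, gives \<open>(\<delta>1 ln |x| - M) |d|\<^sup>2 \<le> Re \<langle>d', d\<rangle> \<le> (\<delta>0 ln |x| + M) |d|\<^sup>2\<close>
  with \<open>M\<close> independent of \<open>x\<close>, and Gronwall's inequality on \<open>[0, 1]\<close> turns this into the
  factors \<open>exp (- M) |x| powr \<delta>1\<close> and \<open>exp M |x| powr \<delta>0\<close>. Solutions exist on \<open>[0, 1]\<close>
  because Picard iteration solves the equation with the field truncated by a radial
  retraction, and the same estimate with \<open>v = 0\<close> keeps small solutions inside the ball,
  where the truncation is invisible.
\<close>

lemma inner_vec_eq_Re_herm: "inner u v = Re (herm u (v :: complex^'n))"
  unfolding inner_vec_def herm_def inner_complex_def by simp

lemma herm_scale_left: "herm (c *s u) v = c * herm u (v :: complex^'n)"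
  unfolding herm_def by (simp add: sum_distrib_left mult.assoc)

lemma herm_add_left: "herm (u + w) v = herm u v + herm w (v :: complex^'n)"
  unfolding herm_def by (simp add: sum.distrib distrib_right)

lemma norm_herm_le: "cmod (herm u v) \<le> norm u * norm (v :: complex^'n)"
proof -
  have "cmod (herm u v) \<le> (\<Sum>k\<in>UNIV. \<bar>cmod (u $ k)\<bar> * \<bar>cmod (v $ k)\<bar>)"
    unfolding herm_def by (rule order_trans[OF norm_sum]) (simp add: norm_mult)
  also have "\<dots> \<le> norm u * norm v"
    unfolding norm_vec_def by (rule L2_set_mult_ineq)
  finally show ?thesis .
qed

lemma norm_scale_vec: "norm (c *s v) = cmod c * norm (v :: complex^'n)"
  unfolding norm_vec_def by (simp add: L2_set_right_distrib norm_mult)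

lemma inner_scale_vec_left: "inner (c *s u) v = Re (c * herm u (v :: complex^'n))"
  by (simp add: inner_vec_eq_Re_herm herm_scale_left)

lemma poly_map_sq_ideal_obtain:
  assumes "poly_map_sq_ideal (G :: complex \<Rightarrow> complex^'n \<Rightarrow> complex^'n)"
  obtains S c where "\<And>k. finite (S k)" "\<And>k a \<alpha>. (a, \<alpha>) \<in> S k \<Longrightarrow> 2 \<le> (\<Sum>i\<in>UNIV. \<alpha> i)"
    "\<And>k x y. G x y $ k = (\<Sum>(a, \<alpha>)\<in>S k. c k (a, \<alpha>) * x ^ a * (\<Prod>i\<in>UNIV. (y $ i) ^ \<alpha> i))"
proof -
  have "\<forall>k. \<exists>S c. finite (S :: (nat \<times> ('n \<Rightarrow> nat)) set) \<and> (\<forall>(a, \<alpha>)\<in>S. (\<Sum>i\<in>UNIV. \<alpha> i) \<ge> 2)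
      \<and> (\<forall>x y. G x y $ k = (\<Sum>(a, \<alpha>)\<in>S. c (a, \<alpha>) * x ^ a * (\<Prod>i\<in>UNIV. (y $ i) ^ \<alpha> i)))"
    using assms unfolding poly_map_sq_ideal_def .
  then have "\<exists>S. \<forall>k. \<exists>c. finite (S k) \<and> (\<forall>(a, \<alpha>)\<in>S k. (\<Sum>i\<in>UNIV. \<alpha> i) \<ge> 2)
      \<and> (\<forall>x y. G x y $ k = (\<Sum>(a, \<alpha>)\<in>S k. c (a, \<alpha>) * x ^ a * (\<Prod>i\<in>UNIV. (y $ i) ^ \<alpha> i)))"
    by (rule choice)
  then obtain S where "\<forall>k. \<exists>c. finite (S k) \<and> (\<forall>(a, \<alpha>)\<in>S k. (\<Sum>i\<in>UNIV. \<alpha> i) \<ge> 2)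
      \<and> (\<forall>x y. G x y $ k = (\<Sum>(a, \<alpha>)\<in>S k. c (a, \<alpha>) * x ^ a * (\<Prod>i\<in>UNIV. (y $ i) ^ \<alpha> i)))" ..
  then have "\<exists>c. \<forall>k. finite (S k) \<and> (\<forall>(a, \<alpha>)\<in>S k. (\<Sum>i\<in>UNIV. \<alpha> i) \<ge> 2)
      \<and> (\<forall>x y. G x y $ k = (\<Sum>(a, \<alpha>)\<in>S k. c k (a, \<alpha>) * x ^ a * (\<Prod>i\<in>UNIV. (y $ i) ^ \<alpha> i)))"
    by (rule choice)
  then obtain c where c: "\<forall>k. finite (S k) \<and> (\<forall>(a, \<alpha>)\<in>S k. (\<Sum>i\<in>UNIV. \<alpha> i) \<ge> 2)
      \<and> (\<forall>x y. G x y $ k = (\<Sum>(a, \<alpha>)\<in>S k. c k (a, \<alpha>) * x ^ a * (\<Prod>i\<in>UNIV. (y $ i) ^ \<alpha> i)))" ..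
  show thesis
    by (rule that[of S c]) (use c in blast)+
qed

lemma poly_map_sq_ideal_zero:
  assumes "poly_map_sq_ideal G"
  shows "G x 0 = 0"
proof -
  obtain S c where "\<And>k. finite (S k)" and S: "\<And>k a \<alpha>. (a, \<alpha>) \<in> S k \<Longrightarrow> 2 \<le> (\<Sum>i\<in>UNIV. \<alpha> i)"
    and G: "\<And>k x y. G x y $ k = (\<Sum>(a, \<alpha>)\<in>S k. c k (a, \<alpha>) * x ^ a * (\<Prod>i\<in>UNIV. (y $ i) ^ \<alpha> i))"
    by (rule poly_map_sq_ideal_obtain[OF assms]) (rule that)
  have "(\<Prod>i\<in>UNIV. (0 :: complex) ^ \<alpha> i) = 0" if "(a, \<alpha>) \<in> S k" for k a \<alpha>
  proof -
    have "\<exists>i. \<alpha> i \<noteq> 0"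
    proof (rule ccontr)
      assume "\<nexists>i. \<alpha> i \<noteq> 0"
      then have "(\<Sum>i\<in>UNIV. \<alpha> i) = 0" by simp
      then show False using S[OF that] by simp
    qed
    then show ?thesis by simp
  qed
  then have "G x 0 $ k = 0" for k
    unfolding G by (intro sum.neutral) auto
  then show ?thesis by (simp add: vec_eq_iff)
qed

lemma continuous_on_poly_map_sq_ideal:
  assumes "poly_map_sq_ideal G"
  shows "continuous_on UNIV (\<lambda>(x, y). G x y)"
proof -
  obtain S c where "\<And>k. finite (S k)" "\<And>k a \<alpha>. (a, \<alpha>) \<in> S k \<Longrightarrow> 2 \<le> (\<Sum>i\<in>UNIV. \<alpha> i)"
    and G: "\<And>k x y. G x y $ k = (\<Sum>(a, \<alpha>)\<in>S k. c k (a, \<alpha>) * x ^ a * (\<Prod>i\<in>UNIV. (y $ i) ^ \<alpha> i))"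
    by (rule poly_map_sq_ideal_obtain[OF assms]) (rule that)
  have "(\<lambda>(x, y). G x y) = (\<lambda>p. \<chi> k. \<Sum>(a, \<alpha>)\<in>S k. c k (a, \<alpha>) * fst p ^ a * (\<Prod>i\<in>UNIV. (snd p $ i) ^ \<alpha> i))"
    by (simp add: fun_eq_iff vec_eq_iff G)
  then show ?thesis by (simp add: case_prod_beta) (intro continuous_intros)
qed

text \<open>Rescaling by \<open>R\<close> moves all coordinates into the unit disc, where \<open>norm_prod_diff\<close> applies.\<close>
lemma norm_monomial_diff_le:
  fixes u v :: "'a::{real_normed_field}^'n"
  assumes "0 < R" "norm u \<le> R" "norm v \<le> R"
  shows "norm ((\<Prod>i\<in>UNIV. u $ i ^ \<alpha> i) - (\<Prod>i\<in>UNIV. v $ i ^ \<alpha> i))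
           \<le> real (\<Sum>i\<in>UNIV. \<alpha> i) * R ^ (\<Sum>i\<in>UNIV. \<alpha> i) / R * norm (u - v)"
proof -
  let ?s = "\<Sum>i\<in>UNIV. \<alpha> i" and ?R = "of_real R :: 'a"
  have scale: "(\<Prod>i\<in>UNIV. w $ i ^ \<alpha> i) = ?R ^ ?s * (\<Prod>i\<in>UNIV. (w $ i / ?R) ^ \<alpha> i)" for w :: "'a^'n"
  proof -
    have "(\<Prod>i\<in>UNIV. (w $ i / ?R) ^ \<alpha> i) = (\<Prod>i\<in>UNIV. w $ i ^ \<alpha> i) / ?R ^ ?s"
      by (simp add: power_divide prod_dividef power_sum)
    then show ?thesis using assms(1) by simp
  qed
  have small: "norm ((w $ i / ?R) ^ \<alpha> i) \<le> 1" if "norm w \<le> R" for w :: "'a^'n" and i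
    using assms(1) Finite_Cartesian_Product.norm_nth_le[of w i] that by (simp add: norm_divide norm_power power_le_one)
  have "norm ((\<Prod>i\<in>UNIV. (u $ i / ?R) ^ \<alpha> i) - (\<Prod>i\<in>UNIV. (v $ i / ?R) ^ \<alpha> i))
      \<le> (\<Sum>i\<in>UNIV. norm ((u $ i / ?R) ^ \<alpha> i - (v $ i / ?R) ^ \<alpha> i))"
    using small assms by (intro norm_prod_diff) auto
  also have "\<dots> \<le> (\<Sum>i\<in>UNIV. real (\<alpha> i) * (norm (u - v) / R))"
  proof (rule sum_mono)
    fix i
    have "norm ((u $ i / ?R) ^ \<alpha> i - (v $ i / ?R) ^ \<alpha> i) \<le> real (\<alpha> i) * norm (u $ i / ?R - v $ i / ?R)"
      using assms Finite_Cartesian_Product.norm_nth_le[of u i] Finite_Cartesian_Product.norm_nth_le[of v i] by (intro norm_power_diff) (simp_all add: norm_divide)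
    also have "norm (u $ i / ?R - v $ i / ?R) = norm ((u - v) $ i) / R"
      using assms(1) by (simp add: diff_divide_distrib[symmetric] norm_divide)
    also have "\<dots> \<le> norm (u - v) / R"
      using assms(1) by (intro divide_right_mono Finite_Cartesian_Product.norm_nth_le) auto
    finally show "norm ((u $ i / ?R) ^ \<alpha> i - (v $ i / ?R) ^ \<alpha> i) \<le> real (\<alpha> i) * (norm (u - v) / R)"
      by (simp add: mult_left_mono order_trans)
  qed
  also have "\<dots> = real ?s * (norm (u - v) / R)"
    by (simp only: of_nat_sum sum_distrib_right)
  finally have "norm ((\<Prod>i\<in>UNIV. (u $ i / ?R) ^ \<alpha> i) - (\<Prod>i\<in>UNIV. (v $ i / ?R) ^ \<alpha> i))
      \<le> real ?s * (norm (u - v) / R)" .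
  then have "R ^ ?s * norm ((\<Prod>i\<in>UNIV. (u $ i / ?R) ^ \<alpha> i) - (\<Prod>i\<in>UNIV. (v $ i / ?R) ^ \<alpha> i))
      \<le> R ^ ?s * (real ?s * (norm (u - v) / R))"
    using assms(1) by (intro mult_left_mono) auto
  then show ?thesis
    using assms(1) by (simp add: scale[of u] scale[of v] right_diff_distrib[symmetric] norm_mult norm_power mult_ac)
qed

lemma norm_monomial_diff_le_of_degree_ge_2:
  fixes u v :: "'a::{real_normed_field}^'n"
  assumes R: "0 < R" "norm u \<le> R" "norm v \<le> R" and deg: "2 \<le> (\<Sum>i\<in>UNIV. \<alpha> i)"
  shows "norm ((\<Prod>i\<in>UNIV. u $ i ^ \<alpha> i) - (\<Prod>i\<in>UNIV. v $ i ^ \<alpha> i))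
           \<le> real (\<Sum>i\<in>UNIV. \<alpha> i) * max 1 R ^ (\<Sum>i\<in>UNIV. \<alpha> i) * R * norm (u - v)"
proof -
  let ?s = "\<Sum>i\<in>UNIV. \<alpha> i"
  obtain j where j: "?s = j + 2" using deg by (metis add.commute le_Suc_ex)
  have "R ^ ?s / R = R ^ j * R" using R by (simp add: j power_add power2_eq_square)
  also have "\<dots> \<le> max 1 R ^ ?s * R"
  proof -
    have "R ^ j \<le> max 1 R ^ j" using R by (intro power_mono) auto
    also have "\<dots> \<le> max 1 R ^ ?s" unfolding j by (intro power_increasing) auto
    finally show ?thesis using R by (intro mult_right_mono) auto
  qed
  finally have pow: "R ^ ?s / R \<le> max 1 R ^ ?s * R" .
  have "norm ((\<Prod>i\<in>UNIV. u $ i ^ \<alpha> i) - (\<Prod>i\<in>UNIV. v $ i ^ \<alpha> i)) \<le> real ?s * (R ^ ?s / R) * norm (u - v)"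
    using norm_monomial_diff_le[OF R] by simp
  also have "\<dots> \<le> real ?s * (max 1 R ^ ?s * R) * norm (u - v)"
    using pow by (intro mult_right_mono mult_left_mono) (auto simp: sum_nonneg)
  finally show ?thesis by (simp add: mult.assoc)
qed

lemma poly_map_sq_ideal_lipschitz:
  fixes G :: "complex \<Rightarrow> complex^'n \<Rightarrow> complex^'n"
  assumes "poly_map_sq_ideal G"
  obtains C :: "real \<Rightarrow> real" where "\<And>R. 0 \<le> C R"
    "\<And>R x u v. 0 < R \<Longrightarrow> cmod x \<le> X \<Longrightarrow> norm u \<le> R \<Longrightarrow> norm v \<le> R \<Longrightarrow>
      norm (G x u - G x v) \<le> C (max 1 R) * R * norm (u - v)"
proof -
  obtain S c where "\<And>k. finite (S k)" and S: "\<And>k a \<alpha>. (a, \<alpha>) \<in> S k \<Longrightarrow> 2 \<le> (\<Sum>i\<in>UNIV. \<alpha> i)"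
    and G: "\<And>k x y. G x y $ k = (\<Sum>(a, \<alpha>)\<in>S k. c k (a, \<alpha>) * x ^ a * (\<Prod>i\<in>UNIV. (y $ i) ^ \<alpha> i))"
    by (rule poly_map_sq_ideal_obtain[OF assms]) (rule that)
  define b where "b k R p = cmod (c k p) * \<bar>X\<bar> ^ fst p * (real (\<Sum>i\<in>UNIV. snd p i) * R ^ (\<Sum>i\<in>UNIV. snd p i))"
    for k R p
  define C where "C R = (\<Sum>k\<in>UNIV. \<Sum>p\<in>S k. b k \<bar>R\<bar> p)" for R
  show thesis
  proof (rule that)
    show "0 \<le> C R" for R
      unfolding C_def b_def by (intro sum_nonneg mult_nonneg_nonneg) (auto simp: sum_nonneg)
    fix R :: real and x and u v :: "complex^'n"
    assume R: "0 < R" "norm u \<le> R" "norm v \<le> R" and x: "cmod x \<le> X"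
    let ?m = "\<lambda>\<alpha> (y :: complex^'n). \<Prod>i\<in>UNIV. y $ i ^ \<alpha> i"
    have summand: "cmod (c k p * x ^ fst p * (?m (snd p) u - ?m (snd p) v)) \<le> b k (max 1 R) p * R * norm (u - v)"
      if "p \<in> S k" for k p
    proof -
      have "cmod x ^ fst p \<le> \<bar>X\<bar> ^ fst p" using x by (intro power_mono) auto
      moreover have "cmod (?m (snd p) u - ?m (snd p) v)
          \<le> real (\<Sum>i\<in>UNIV. snd p i) * max 1 R ^ (\<Sum>i\<in>UNIV. snd p i) * R * norm (u - v)"
        using S[of "fst p" "snd p" k] that by (intro norm_monomial_diff_le_of_degree_ge_2[OF R]) simp
      ultimately show ?thesis
        unfolding b_def norm_mult norm_power by (simp add: mult_mono mult.assoc)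
    qed
    have "norm (G x u - G x v) \<le> (\<Sum>k\<in>UNIV. cmod ((G x u - G x v) $ k))"
      unfolding norm_vec_def by (rule L2_set_le_sum) simp
    also have "\<dots> \<le> (\<Sum>k\<in>UNIV. \<Sum>p\<in>S k. b k (max 1 R) p * R * norm (u - v))"
    proof (rule sum_mono)
      fix k
      have "cmod ((G x u - G x v) $ k) = cmod (\<Sum>p\<in>S k. c k p * x ^ fst p * (?m (snd p) u - ?m (snd p) v))"
        by (simp add: G case_prod_beta sum_subtractf[symmetric] right_diff_distrib)
      also have "\<dots> \<le> (\<Sum>p\<in>S k. b k (max 1 R) p * R * norm (u - v))"
        using summand by (intro order_trans[OF norm_sum] sum_mono) auto
      finally show "cmod ((G x u - G x v) $ k) \<le> (\<Sum>p\<in>S k. b k (max 1 R) p * R * norm (u - v))" .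
    qed
    also have "\<dots> = C (max 1 R) * R * norm (u - v)"
      by (simp add: C_def sum_distrib_right)
    finally show "norm (G x u - G x v) \<le> C (max 1 R) * R * norm (u - v)" .
  qed
qed

lemma poly_map_sq_ideal_small_lipschitz:
  fixes G :: "complex \<Rightarrow> complex^'n \<Rightarrow> complex^'n"
  assumes G: "poly_map_sq_ideal G" and \<epsilon>: "0 < \<epsilon>"
  obtains \<rho> where "0 < \<rho>" "\<And>x u v. cmod x \<le> X \<Longrightarrow> norm u \<le> \<rho> \<Longrightarrow> norm v \<le> \<rho> \<Longrightarrow>
      norm (G x u - G x v) \<le> \<epsilon> * norm (u - v)"
proof -
  obtain C where C: "\<And>R. 0 \<le> C R" "\<And>R x u v. 0 < R \<Longrightarrow> cmod x \<le> X \<Longrightarrow> norm u \<le> R \<Longrightarrow> norm v \<le> R \<Longrightarrow>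
      norm (G x u - G x v) \<le> C (max 1 R) * R * norm (u - v)"
    using poly_map_sq_ideal_lipschitz[OF G] by blast
  define \<rho> where "\<rho> = min 1 (\<epsilon> / (C 1 + 1))"
  have \<rho>: "0 < \<rho>" "max 1 \<rho> = 1" using \<epsilon> C(1)[of 1] by (auto simp: \<rho>_def)
  have "C 1 * \<rho> \<le> C 1 * (\<epsilon> / (C 1 + 1))"
    using C(1)[of 1] by (intro mult_left_mono) (auto simp: \<rho>_def)
  also have "\<dots> \<le> \<epsilon>"
    using C(1)[of 1] \<epsilon> by (simp add: field_simps)
  finally have small: "C 1 * \<rho> \<le> \<epsilon>" .
  show thesis
  proof (rule that[OF \<rho>(1)])
    fix x and u v :: "complex^'n" assume "cmod x \<le> X" "norm u \<le> \<rho>" "norm v \<le> \<rho>"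
    then have "norm (G x u - G x v) \<le> C 1 * \<rho> * norm (u - v)"
      using C(2)[OF \<rho>(1)] \<rho>(2) by simp
    also have "\<dots> \<le> \<epsilon> * norm (u - v)"
      using small by (rule mult_right_mono) simp
    finally show "norm (G x u - G x v) \<le> \<epsilon> * norm (u - v)" .
  qed
qed

lemma poly_map_sq_ideal_locally_lipschitz:
  fixes G :: "complex \<Rightarrow> complex^'n \<Rightarrow> complex^'n"
  assumes "poly_map_sq_ideal G" "0 < R"
  shows "\<exists>L. \<forall>x u v. cmod x \<le> X \<longrightarrow> norm u \<le> R \<longrightarrow> norm v \<le> R \<longrightarrow>
      norm (G x u - G x v) \<le> L * norm (u - v)"
  using poly_map_sq_ideal_lipschitz[OF assms(1)] assms(2) by metis

lemma has_real_derivative_exp_mult_norm_sq: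
  fixes d :: "real \<Rightarrow> 'a::real_inner"
  assumes "(d has_vector_derivative d') (at s)"
  shows "((\<lambda>s. exp (c * (s - a)) * (norm (d s))\<^sup>2) has_real_derivative
      exp (c * (s - a)) * (c * (norm (d s))\<^sup>2 + 2 * inner d' (d s))) (at s)"
proof -
  have "((\<lambda>s. inner (d s) (d s)) has_derivative (\<lambda>h. inner (d s) (h *\<^sub>R d') + inner (h *\<^sub>R d') (d s))) (at s)"
    using assms unfolding has_vector_derivative_def by (intro derivative_intros)
  then have norm_sq: "((\<lambda>s. (norm (d s))\<^sup>2) has_real_derivative 2 * inner d' (d s)) (at s)"
    unfolding has_field_derivative_def power2_norm_eq_inner
    by (rule has_derivative_eq_rhs) (auto simp: fun_eq_iff algebra_simps inner_commute)
  have "((\<lambda>s. exp (c * (s - a))) has_real_derivative exp (c * (s - a)) * c) (at s)"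
    by (auto intro!: derivative_eq_intros)
  from DERIV_mult[OF this norm_sq] show ?thesis
    by (simp add: algebra_simps)
qed

lemma exp_mult_norm_sq_monotone:
  fixes d :: "real \<Rightarrow> 'a::real_inner"
  assumes der: "\<And>s. s \<in> {a..b} \<Longrightarrow> (d has_vector_derivative d' s) (at s within {a..b})"
    and t: "t \<in> {a..b}"
  shows "(\<And>s. s \<in> {a..b} \<Longrightarrow> c * (norm (d s))\<^sup>2 + 2 * inner (d' s) (d s) \<le> 0) \<Longrightarrow>
      exp (c * (t - a)) * (norm (d t))\<^sup>2 \<le> (norm (d a))\<^sup>2"
    and "(\<And>s. s \<in> {a..b} \<Longrightarrow> 0 \<le> c * (norm (d s))\<^sup>2 + 2 * inner (d' s) (d s)) \<Longrightarrow>
      (norm (d a))\<^sup>2 \<le> exp (c * (t - a)) * (norm (d t))\<^sup>2"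
proof -
  let ?f = "\<lambda>s. exp (c * (s - a)) * (norm (d s))\<^sup>2"
  have "continuous_on {a..b} d" using der by (rule continuous_on_vector_derivative)
  then have cont: "continuous_on {a..t} ?f"
    using t by (intro continuous_intros) (auto elim: continuous_on_subset)
  have deriv: "(?f has_real_derivative exp (c * (s - a)) * (c * (norm (d s))\<^sup>2 + 2 * inner (d' s) (d s))) (at s)"
    if "a < s" "s < t" for s
    using der[of s] that t by (intro has_real_derivative_exp_mult_norm_sq) (simp add: at_within_Icc_at)
  have at: "a \<le> t" using t by simp
  show "?f t \<le> (norm (d a))\<^sup>2"
    if "\<And>s. s \<in> {a..b} \<Longrightarrow> c * (norm (d s))\<^sup>2 + 2 * inner (d' s) (d s) \<le> 0"
  proof -
    have "?f t \<le> ?f a"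
    proof (rule DERIV_nonpos_imp_decreasing_open[OF at _ cont])
      fix s assume s: "a < s" "s < t"
      have "exp (c * (s - a)) * (c * (norm (d s))\<^sup>2 + 2 * inner (d' s) (d s)) \<le> 0"
        using that[of s] s t by (intro mult_nonneg_nonpos) auto
      with deriv[OF s] show "\<exists>y. (?f has_real_derivative y) (at s) \<and> y \<le> 0" by blast
    qed
    then show ?thesis by simp
  qed
  show "(norm (d a))\<^sup>2 \<le> ?f t"
    if "\<And>s. s \<in> {a..b} \<Longrightarrow> 0 \<le> c * (norm (d s))\<^sup>2 + 2 * inner (d' s) (d s)"
  proof -
    have "?f a \<le> ?f t"
    proof (rule DERIV_nonneg_imp_increasing_open[OF at _ cont])
      fix s assume s: "a < s" "s < t"
      have "0 \<le> exp (c * (s - a)) * (c * (norm (d s))\<^sup>2 + 2 * inner (d' s) (d s))"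
        using that[of s] s t by simp
      with deriv[OF s] show "\<exists>y. (?f has_real_derivative y) (at s) \<and> 0 \<le> y" by blast
    qed
    then show ?thesis by simp
  qed
qed

lemma gronwall_norm_upper:
  fixes d :: "real \<Rightarrow> 'a::real_inner"
  assumes der: "\<And>s. s \<in> {a..b} \<Longrightarrow> (d has_vector_derivative d' s) (at s within {a..b})"
    and bound: "\<And>s. s \<in> {a..b} \<Longrightarrow> inner (d' s) (d s) \<le> c * (norm (d s))\<^sup>2"
    and t: "t \<in> {a..b}"
  shows "norm (d t) \<le> exp (c * (t - a)) * norm (d a)"
proof -
  have decay: "exp (- 2 * c * (t - a)) * (norm (d t))\<^sup>2 \<le> (norm (d a))\<^sup>2"
    using bound by (intro exp_mult_norm_sq_monotone(1)[OF der t]) (auto simp: algebra_simps)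
  have "(norm (d t))\<^sup>2 = exp (2 * (c * (t - a))) * (exp (- 2 * c * (t - a)) * (norm (d t))\<^sup>2)"
    by (simp add: mult.assoc[symmetric] flip: exp_add)
  also have "\<dots> \<le> exp (2 * (c * (t - a))) * (norm (d a))\<^sup>2"
    using decay by (rule mult_left_mono) simp
  also have "\<dots> = (exp (c * (t - a)) * norm (d a))\<^sup>2"
    by (simp add: exp_double power_mult_distrib)
  finally show ?thesis by (rule power2_le_imp_le) simp
qed

lemma gronwall_norm_lower:
  fixes d :: "real \<Rightarrow> 'a::real_inner"
  assumes der: "\<And>s. s \<in> {a..b} \<Longrightarrow> (d has_vector_derivative d' s) (at s within {a..b})"
    and bound: "\<And>s. s \<in> {a..b} \<Longrightarrow> c * (norm (d s))\<^sup>2 \<le> inner (d' s) (d s)"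
    and t: "t \<in> {a..b}"
  shows "exp (c * (t - a)) * norm (d a) \<le> norm (d t)"
proof -
  have growth: "(norm (d a))\<^sup>2 \<le> exp (- 2 * c * (t - a)) * (norm (d t))\<^sup>2"
    using bound by (intro exp_mult_norm_sq_monotone(2)[OF der t]) (auto simp: algebra_simps)
  have "(exp (c * (t - a)) * norm (d a))\<^sup>2 = exp (2 * (c * (t - a))) * (norm (d a))\<^sup>2"
    by (simp add: exp_double power_mult_distrib)
  also have "\<dots> \<le> exp (2 * (c * (t - a))) * (exp (- 2 * c * (t - a)) * (norm (d t))\<^sup>2)"
    using growth by (rule mult_left_mono) simp
  also have "\<dots> = (norm (d t))\<^sup>2"
    by (simp add: mult.assoc[symmetric] flip: exp_add)
  finally show ?thesis by (rule power2_le_imp_le) simp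
qed

lemma has_integral_exp_mult:
  fixes \<gamma> t :: real
  assumes "\<gamma> \<noteq> 0" "0 \<le> t"
  shows "((\<lambda>s. exp (\<gamma> * s)) has_integral (exp (\<gamma> * t) - 1) / \<gamma>) {0..t}"
proof -
  have "((\<lambda>s. exp (\<gamma> * s)) has_integral exp (\<gamma> * t) / \<gamma> - exp (\<gamma> * 0) / \<gamma>) {0..t}"
  proof (rule fundamental_theorem_of_calculus)
    fix s assume "s \<in> {0..t}"
    have "((\<lambda>s. exp (\<gamma> * s) / \<gamma>) has_real_derivative exp (\<gamma> * s) * \<gamma> / \<gamma>) (at s within {0..t})"
      by (auto intro!: derivative_eq_intros)
    then show "((\<lambda>s. exp (\<gamma> * s) / \<gamma>) has_vector_derivative exp (\<gamma> * s)) (at s within {0..t})"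
      using assms by (simp add: has_real_derivative_iff_has_vector_derivative)
  qed (use assms in simp)
  then show ?thesis by (simp add: diff_divide_distrib)
qed

locale lipschitz_ode =
  fixes F :: "real \<Rightarrow> 'a::banach \<Rightarrow> 'a" and K :: real
  assumes continuous_on_field: "\<And>y. continuous_on {0..1} y \<Longrightarrow> continuous_on {0..1} (\<lambda>s. F s (y s))"
    and field_lipschitz: "\<And>t u v. t \<in> {0..1} \<Longrightarrow> norm (F t u - F t v) \<le> K * norm (u - v)"
    and K_pos: "0 < K"
begin

lemma integrable_on_field:
  assumes "continuous_on {0..1} y" "t \<in> {0..1}"
  shows "(\<lambda>s. F s (y s)) integrable_on {0..t}"
  using assms by (intro integrable_continuous_interval continuous_on_subset[OF continuous_on_field]) auto

definition picard_iterate :: "'a \<Rightarrow> nat \<Rightarrow> real \<Rightarrow> 'a" where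
  "picard_iterate y0 k = ((\<lambda>q t. y0 + integral {0..t} (\<lambda>s. F s (q s))) ^^ k) (\<lambda>_. y0)"

lemma picard_iterate_0 [simp]: "picard_iterate y0 0 t = y0"
  by (simp add: picard_iterate_def)

lemma picard_iterate_Suc:
  "picard_iterate y0 (Suc k) t = y0 + integral {0..t} (\<lambda>s. F s (picard_iterate y0 k s))"
  by (simp add: picard_iterate_def)

lemma continuous_on_picard_iterate: "continuous_on {0..1} (picard_iterate y0 k)"
proof (induction k)
  case (Suc k)
  have "continuous_on {0..1} (\<lambda>t. integral {0..t} (\<lambda>s. F s (picard_iterate y0 k s)))"
    by (rule continuous_on_vector_derivative, rule integral_has_vector_derivative)
      (use continuous_on_field[OF Suc] in auto)
  then show ?case by (simp add: picard_iterate_Suc continuous_on_add)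
qed simp

text \<open>Bielecki's trick: the weight \<open>exp (2 * K * t)\<close> makes each Picard step a contraction by 1/2.\<close>
lemma picard_iterate_step_le:
  assumes M: "\<And>s. s \<in> {0..1} \<Longrightarrow> norm (F s y0) \<le> M" and t: "t \<in> {0..1}"
  shows "norm (picard_iterate y0 (Suc k) t - picard_iterate y0 k t) \<le> M * exp (2 * K * t) / 2 ^ k"
proof -
  have "norm (F 0 y0) \<le> M" by (rule M) simp
  then have M0: "0 \<le> M" by (rule order_trans[OF norm_ge_zero])
  show ?thesis
  using t
proof (induction k arbitrary: t)
  case 0
  have "norm (integral {0..t} (\<lambda>s. F s y0)) \<le> integral {0..t} (\<lambda>s. M)"
    using 0 M by (intro integral_norm_bound_integral integrable_on_field) auto
  also have "\<dots> = M * t" using 0 by simp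
  also have "\<dots> \<le> M * exp (2 * K * t)"
  proof (rule mult_left_mono)
    have "0 \<le> K * t" using 0 K_pos by simp
    then have "t \<le> 1 + 2 * K * t" using 0 by simp
    also have "\<dots> \<le> exp (2 * K * t)" by (rule exp_ge_add_one_self)
    finally show "t \<le> exp (2 * K * t)" .
  qed (rule M0)
  finally show ?case by (simp add: picard_iterate_Suc)
next
  case (Suc k)
  let ?p = "picard_iterate y0"
  have "?p (Suc (Suc k)) t - ?p (Suc k) t
      = integral {0..t} (\<lambda>s. F s (?p (Suc k) s)) - integral {0..t} (\<lambda>s. F s (?p k s))"
    unfolding picard_iterate_Suc[of y0 "Suc k" t] picard_iterate_Suc[of y0 k t] by simp
  also have "\<dots> = integral {0..t} (\<lambda>s. F s (?p (Suc k) s) - F s (?p k s))"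
    using Suc.prems by (intro integral_diff[symmetric] integrable_on_field continuous_on_picard_iterate)
  also have "norm \<dots> \<le> integral {0..t} (\<lambda>s. K * M / 2 ^ k * exp (2 * K * s))"
  proof (rule integral_norm_bound_integral)
    show "(\<lambda>s. F s (?p (Suc k) s) - F s (?p k s)) integrable_on {0..t}"
      using Suc.prems by (intro integrable_diff integrable_on_field continuous_on_picard_iterate)
    show "(\<lambda>s. K * M / 2 ^ k * exp (2 * K * s)) integrable_on {0..t}"
      by (intro integrable_continuous_interval continuous_intros)
    fix s assume "s \<in> {0..t}"
    then have s: "s \<in> {0..1}" using Suc.prems by auto
    have "norm (F s (?p (Suc k) s) - F s (?p k s)) \<le> K * norm (?p (Suc k) s - ?p k s)"
      by (rule field_lipschitz[OF s])
    also have "\<dots> \<le> K * (M * exp (2 * K * s) / 2 ^ k)"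
      using Suc.IH[OF s] K_pos by (intro mult_left_mono) auto
    finally show "norm (F s (?p (Suc k) s) - F s (?p k s)) \<le> K * M / 2 ^ k * exp (2 * K * s)"
      by simp
  qed
  also have "\<dots> = K * M / 2 ^ k * ((exp (2 * K * t) - 1) / (2 * K))"
    using has_integral_exp_mult[of "2 * K" t] K_pos Suc.prems by (simp add: integral_unique)
  also have "\<dots> \<le> K * M / 2 ^ k * (exp (2 * K * t) / (2 * K))"
    using K_pos M0 by (intro mult_left_mono divide_right_mono) auto
  also have "\<dots> = M * exp (2 * K * t) / 2 ^ Suc k"
    using K_pos by (simp add: field_simps)
  finally show ?case .
qed
qed

lemma picard_iterate_uniform_limit:
  obtains y where "uniform_limit {0..1} (picard_iterate y0) y sequentially"
proof -
  let ?p = "picard_iterate y0"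
  have "compact ((\<lambda>s. F s y0) ` {0..1})"
    using continuous_on_field[of "\<lambda>_. y0"] by (intro compact_continuous_image) auto
  then obtain M where M: "\<And>s. s \<in> {0..1} \<Longrightarrow> norm (F s y0) \<le> M"
    by (meson compact_imp_bounded bounded_iff imageI)
  have "norm (F 0 y0) \<le> M" by (rule M) simp
  then have M0: "0 \<le> M" by (rule order_trans[OF norm_ge_zero])
  have step: "norm (?p (Suc k) t - ?p k t) \<le> M * exp (2 * K) * (1 / 2) ^ k" if t: "t \<in> {0..1}" for k t
  proof -
    have "norm (?p (Suc k) t - ?p k t) \<le> M * exp (2 * K * t) / 2 ^ k"
      by (rule picard_iterate_step_le[OF M t])
    also have "\<dots> \<le> M * exp (2 * K) / 2 ^ k"
      using t K_pos M0 by (intro divide_right_mono mult_left_mono) auto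
    finally show ?thesis by (simp add: power_one_over)
  qed
  have "uniform_limit {0..1} (\<lambda>n t. \<Sum>k<n. ?p (Suc k) t - ?p k t) (\<lambda>t. \<Sum>k. ?p (Suc k) t - ?p k t) sequentially"
    using step by (intro Weierstrass_m_test summable_mult summable_geometric) auto
  then have "uniform_limit {0..1} (\<lambda>n t. y0 + (\<Sum>k<n. ?p (Suc k) t - ?p k t))
      (\<lambda>t. y0 + (\<Sum>k. ?p (Suc k) t - ?p k t)) sequentially"
    by (intro uniform_limit_intros)
  moreover have "(\<lambda>n t. y0 + (\<Sum>k<n. ?p (Suc k) t - ?p k t)) = ?p"
    using sum_lessThan_telescope[of "\<lambda>k. ?p k _"] by (simp add: fun_eq_iff)
  ultimately show thesis by (intro that) simp
qed

lemma ode_solution_exists: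
  "\<exists>y. y 0 = y0 \<and> (\<forall>t\<in>{0..1}. (y has_vector_derivative F t (y t)) (at t within {0..1}))"
proof -
  let ?p = "picard_iterate y0"
  obtain y where lim: "uniform_limit {0..1} ?p y sequentially"
    by (rule picard_iterate_uniform_limit)
  have y_cont: "continuous_on {0..1} y"
    by (rule uniform_limit_theorem[OF _ lim]) (auto simp: continuous_on_picard_iterate)
  have field_lim: "uniform_limit {0..1} (\<lambda>k s. F s (?p k s)) (\<lambda>s. F s (y s)) sequentially"
  proof (rule uniform_limitI)
    fix e :: real assume "0 < e"
    then have "\<forall>\<^sub>F k in sequentially. \<forall>s\<in>{0..1}. dist (?p k s) (y s) < e / K"
      using lim K_pos by (auto simp: uniform_limit_iff)
    then show "\<forall>\<^sub>F k in sequentially. \<forall>s\<in>{0..1}. dist (F s (?p k s)) (F s (y s)) < e"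
    proof eventually_elim
      case (elim k)
      show ?case
      proof
        fix s :: real assume s: "s \<in> {0..1}"
        have "dist (F s (?p k s)) (F s (y s)) \<le> K * dist (?p k s) (y s)"
          using field_lipschitz[OF s] by (simp add: dist_norm)
        also have "\<dots> < K * (e / K)" using elim s K_pos by (intro mult_strict_left_mono) auto
        finally show "dist (F s (?p k s)) (F s (y s)) < e" using K_pos by simp
      qed
    qed
  qed
  have fixed_point: "y t = y0 + integral {0..t} (\<lambda>s. F s (y s))" if t: "t \<in> {0..1}" for t
  proof -
    have sub: "{0..t} \<subseteq> {0..1}" using t by auto
    obtain I J where I: "\<And>k. ((\<lambda>s. F s (?p k s)) has_integral I k) {0..t}"
      and J: "((\<lambda>s. F s (y s)) has_integral J) {0..t}" and "I \<longlonglongrightarrow> J"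
      by (rule uniform_limit_integral[OF uniform_limit_on_subset[OF field_lim sub]])
        (auto intro: continuous_on_subset[OF continuous_on_field[OF continuous_on_picard_iterate] sub])
    then have "(\<lambda>k. ?p (Suc k) t) \<longlonglongrightarrow> y0 + J"
      by (simp add: picard_iterate_Suc integral_unique[OF I] tendsto_add)
    moreover have "(\<lambda>k. ?p (Suc k) t) \<longlonglongrightarrow> y t"
      using tendsto_uniform_limitI[OF lim t] by (rule LIMSEQ_Suc)
    ultimately show ?thesis
      using J LIMSEQ_unique by (metis integral_unique)
  qed
  show ?thesis
  proof (intro exI conjI ballI)
    show "y 0 = y0" using fixed_point[of 0] by simp
    fix t :: real assume t: "t \<in> {0..1}"
    show "(y has_vector_derivative F t (y t)) (at t within {0..1})"
    proof (rule has_vector_derivative_transform[OF t])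
      show "y s = y0 + integral {0..s} (\<lambda>s. F s (y s))" if "s \<in> {0..1}" for s
        using fixed_point[OF that] .
      show "((\<lambda>t. y0 + integral {0..t} (\<lambda>s. F s (y s))) has_vector_derivative F t (y t)) (at t within {0..1})"
        using integral_has_vector_derivative[OF continuous_on_field[OF y_cont] t]
        by (intro derivative_eq_intros) auto
    qed
  qed
qed

end

lemma slit_disc2_Ln_bounds:
  assumes "x \<in> slit_disc2"
  shows "x \<noteq> 0" "ln (cmod x) < ln 2" "\<bar>Im (Ln x)\<bar> \<le> pi"
proof -
  show nz: "x \<noteq> 0" using assms by (auto simp: slit_disc2_def)
  moreover have "cmod x < 2" using assms by (simp add: slit_disc2_def)
  ultimately show "ln (cmod x) < ln 2" by simp
  show "\<bar>Im (Ln x)\<bar> \<le> pi" using mpi_less_Im_Ln[OF nz] Im_Ln_le_pi[OF nz] by auto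
qed

text \<open>Split \<open>Re c = (Re c + ln 2) - ln 2\<close>: the first factor is nonnegative, so the cone condition
  on \<open>Re h\<close> can be multiplied by it; the rest costs at most \<open>\<delta>1 ln 2 W\<close>.\<close>
lemma Re_mult_cone_bounds:
  fixes c h :: complex and \<delta>0 \<delta>1 K W :: real
  assumes h: "- \<delta>1 * W \<le> Re h" "Re h \<le> - \<delta>0 * W" "cmod h \<le> K * W"
    and c: "- ln 2 < Re c" "\<bar>Im c\<bar> \<le> pi"
    and "0 \<le> \<delta>0" "0 \<le> W"
  shows "Re (c * h) \<le> (- \<delta>0 * Re c + pi * K + \<delta>1 * ln 2) * W"
    and "(- \<delta>1 * Re c - pi * K - \<delta>1 * ln 2) * W \<le> Re (c * h)"
proof -
  let ?s = "Re c + ln 2"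
  have s: "0 \<le> ?s" using c by simp
  have "\<bar>Im c * Im h\<bar> \<le> pi * (K * W)"
    unfolding abs_mult using c(2) abs_Im_le_cmod[of h] h(3) by (intro mult_mono) auto
  then have Im_part: "- (pi * K * W) \<le> Im c * Im h" "Im c * Im h \<le> pi * K * W"
    by (auto simp: abs_le_iff)
  have "?s * Re h \<le> ?s * (- \<delta>0 * W)" using h(2) s by (rule mult_left_mono)
  then have up1: "?s * Re h \<le> - \<delta>0 * Re c * W - \<delta>0 * ln 2 * W" by (simp add: algebra_simps)
  have "?s * (- \<delta>1 * W) \<le> ?s * Re h" using h(1) s by (rule mult_left_mono)
  then have lo1: "- \<delta>1 * Re c * W - \<delta>1 * ln 2 * W \<le> ?s * Re h" by (simp add: algebra_simps)
  have "ln 2 * (- \<delta>1 * W) \<le> ln 2 * Re h" using h(1) by (intro mult_left_mono) auto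
  then have up2: "- ln 2 * Re h \<le> \<delta>1 * ln 2 * W" by (simp add: algebra_simps)
  have "ln 2 * Re h \<le> ln 2 * (- \<delta>0 * W)" using h(2) by (intro mult_left_mono) auto
  then have lo2: "\<delta>0 * ln 2 * W \<le> - ln 2 * Re h" by (simp add: algebra_simps)
  have pos: "0 \<le> \<delta>0 * ln 2 * W" using assms(6,7) by simp
  have eq: "Re (c * h) = ?s * Re h - ln 2 * Re h - Im c * Im h"
    by (simp add: algebra_simps)
  have rhs: "(- \<delta>0 * Re c + pi * K + \<delta>1 * ln 2) * W = - \<delta>0 * Re c * W + pi * K * W + \<delta>1 * ln 2 * W"
    "(- \<delta>1 * Re c - pi * K - \<delta>1 * ln 2) * W = - \<delta>1 * Re c * W - pi * K * W - \<delta>1 * ln 2 * W"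
    by (simp_all add: algebra_simps)
  show "Re (c * h) \<le> (- \<delta>0 * Re c + pi * K + \<delta>1 * ln 2) * W"
    unfolding eq rhs using up1 up2 pos Im_part by linarith
  show "(- \<delta>1 * Re c - pi * K - \<delta>1 * ln 2) * W \<le> Re (c * h)"
    unfolding eq rhs using lo1 lo2 pos Im_part by linarith
qed

definition radial_retraction :: "real \<Rightarrow> 'a::real_normed_vector \<Rightarrow> 'a" where
  "radial_retraction \<rho> w = (\<rho> / max \<rho> (norm w)) *\<^sub>R w"

lemma norm_radial_retraction_le:
  assumes "0 < \<rho>"
  shows "norm (radial_retraction \<rho> w) \<le> \<rho>"
  using assms by (simp add: radial_retraction_def divide_le_eq mult_left_mono)

lemma radial_retraction_eq_self:
  assumes "norm w \<le> \<rho>"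
  shows "radial_retraction \<rho> w = w"
  using assms by (cases "w = 0") (auto simp: radial_retraction_def max_def)

lemma continuous_on_radial_retraction:
  assumes "0 < \<rho>" "continuous_on S y"
  shows "continuous_on S (\<lambda>s. radial_retraction \<rho> (y s))"
  unfolding radial_retraction_def using assms by (intro continuous_intros) auto

lemma radial_retraction_lipschitz:
  assumes "0 < \<rho>"
  shows "norm (radial_retraction \<rho> a - radial_retraction \<rho> b) \<le> 2 * norm (a - b)"
proof -
  define ma mb where "ma = max \<rho> (norm a)" and "mb = max \<rho> (norm b)"
  have pos: "0 < ma" "0 < mb" "\<rho> \<le> ma" "norm b \<le> mb" using assms by (auto simp: ma_def mb_def)
  have scale: "\<rho> / ma \<le> 1" using pos assms by simp
  have "radial_retraction \<rho> a - radial_retraction \<rho> b = (\<rho> / ma) *\<^sub>R (a - b) + (\<rho> / ma - \<rho> / mb) *\<^sub>R b"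
    by (simp add: radial_retraction_def ma_def mb_def algebra_simps)
  then have "norm (radial_retraction \<rho> a - radial_retraction \<rho> b)
      \<le> norm ((\<rho> / ma) *\<^sub>R (a - b)) + norm ((\<rho> / ma - \<rho> / mb) *\<^sub>R b)"
    by (simp only: norm_triangle_ineq)
  also have "\<dots> = \<rho> / ma * norm (a - b) + \<bar>\<rho> / ma - \<rho> / mb\<bar> * norm b"
    using assms pos by simp
  also have "\<dots> \<le> norm (a - b) + norm (a - b)"
  proof (rule add_mono)
    show "\<rho> / ma * norm (a - b) \<le> norm (a - b)"
      by (rule mult_left_le_one_le) (use scale pos assms in auto)
    have "\<rho> / ma - \<rho> / mb = (mb - ma) * (\<rho> / ma) * (1 / mb)"
      using pos by (simp add: field_simps)
    then have "\<bar>\<rho> / ma - \<rho> / mb\<bar> * norm b = \<bar>mb - ma\<bar> * (\<rho> / ma) * (norm b / mb)"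
      using pos assms by (simp add: abs_mult)
    also have "\<dots> \<le> \<bar>mb - ma\<bar> * 1 * 1"
      using pos scale assms by (intro mult_mono) auto
    also have "\<dots> \<le> \<bar>norm b - norm a\<bar>"
      unfolding ma_def mb_def by (simp add: max_def)
    also have "\<dots> \<le> norm (a - b)"
      by (metis norm_minus_commute norm_triangle_ineq3)
    finally show "\<bar>\<rho> / ma - \<rho> / mb\<bar> * norm b \<le> norm (a - b)" .
  qed
  finally show ?thesis by simp
qed

lemma continuous_on_scale_vec [continuous_intros]:
  "continuous_on S f \<Longrightarrow> continuous_on S (\<lambda>s. c *s (f s :: 'a::real_normed_field^'n))"
  by (simp add: vector_scalar_mult_def continuous_on_vec_lambda continuous_on_mult continuous_on_component)

lemma continuous_on_matrix_vector_mult [continuous_intros]: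
  "continuous_on S f \<Longrightarrow> continuous_on S (\<lambda>s. M *v (f s :: 'a::real_normed_field^'n))"
  unfolding matrix_vector_mult_def by (intro continuous_intros)

definition base_orbit :: "complex \<Rightarrow> real \<Rightarrow> complex" where
  "base_orbit x t = exp (complex_of_real (1 - t) * Ln x)"

lemma norm_base_orbit_le:
  assumes "x \<in> slit_disc2" "t \<in> {0..1}"
  shows "cmod (base_orbit x t) \<le> 2"
proof -
  have nz: "x \<noteq> 0" and "cmod x < 2" using assms(1) by (auto simp: slit_disc2_def)
  have "cmod (base_orbit x t) = cmod x powr (1 - t)"
    using nz by (simp add: base_orbit_def powr_def)
  also have "\<dots> \<le> max 1 (cmod x)"
  proof (cases "cmod x \<le> 1")
    case False
    then have "cmod x powr (1 - t) \<le> cmod x powr 1" using assms(2) by (intro powr_mono) auto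
    then show ?thesis using nz by simp
  qed (use assms(2) in \<open>auto intro: powr_le1\<close>)
  also have "\<dots> \<le> 2" using \<open>cmod x < 2\<close> by simp
  finally show ?thesis .
qed

lemma continuous_on_base_orbit: "continuous_on S (base_orbit x)"
  unfolding base_orbit_def by (intro continuous_intros)

locale flow_setting =
  fixes A :: "complex^'n^'n" and G :: "complex \<Rightarrow> complex^'n \<Rightarrow> complex^'n"
    and \<delta>0 \<delta>1 \<epsilon> \<rho> :: real
  assumes delta0_nonneg: "0 \<le> \<delta>0" and delta1_nonneg: "0 \<le> \<delta>1"
    and eps_nonneg: "0 \<le> \<epsilon>" and rho_pos: "0 < \<rho>"
    and A_upper: "\<And>y. Re (herm (A *v y) y) \<le> (- \<delta>0 - \<epsilon>) * (norm y)\<^sup>2"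
    and A_lower: "\<And>y. (- \<delta>1 + \<epsilon>) * (norm y)\<^sup>2 \<le> Re (herm (A *v y) y)"
    and G_zero: "\<And>x. G x 0 = 0"
    and G_continuous: "continuous_on UNIV (\<lambda>(x, y). G x y)"
    and G_small_lipschitz: "\<And>x u v. cmod x \<le> 2 \<Longrightarrow> norm u \<le> \<rho> \<Longrightarrow> norm v \<le> \<rho> \<Longrightarrow>
      norm (G x u - G x v) \<le> \<epsilon> * norm (u - v)"
    and G_locally_lipschitz: "\<And>R. 0 < R \<Longrightarrow> \<exists>L. \<forall>x u v. cmod x \<le> 2 \<longrightarrow> norm u \<le> R \<longrightarrow> norm v \<le> R \<longrightarrow>
      norm (G x u - G x v) \<le> L * norm (u - v)"
begin

definition flow_field :: "complex \<Rightarrow> real \<Rightarrow> complex^'n \<Rightarrow> complex^'n" where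
  "flow_field x t w = (- Ln x) *s (A *v w + G (base_orbit x t) w)"

text \<open>\<open>\<pi>\<close> bounds \<open>|Im (Ln x)|\<close> and \<open>ln 2\<close> bounds \<open>ln |x|\<close> on the slit disc.\<close>
definition drift :: real where
  "drift = pi * (onorm ((*v) A) + \<epsilon>) + \<delta>1 * ln 2"

definition radius :: real where
  "radius = \<rho> * exp (- (\<delta>0 * ln 2 + drift))"

lemma drift_nonneg: "0 \<le> drift"
  unfolding drift_def using onorm_pos_le[of "(*v) A"] eps_nonneg delta1_nonneg by simp

lemma radius_pos: "0 < radius"
  unfolding radius_def using rho_pos by simp

lemma is_flow_sol_iff:
  "is_flow_sol A G x u y \<longleftrightarrow>
     y 0 = u \<and> (\<forall>t\<in>{0..1}. (y has_vector_derivative flow_field x t (y t)) (at t within {0..1}))"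
  by (simp add: is_flow_sol_def flow_field_def base_orbit_def)

lemma flow_field_diff:
  "flow_field x t w1 - flow_field x t w2
     = (- Ln x) *s (A *v (w1 - w2) + (G (base_orbit x t) w1 - G (base_orbit x t) w2))"
  unfolding flow_field_def vector_ssub_ldistrib[symmetric]
  by (simp add: algebra_simps)

lemma flow_field_zero: "flow_field x t 0 = 0"
  by (simp add: flow_field_def G_zero)

lemma norm_flow_field_diff_le:
  assumes "norm (G (base_orbit x t) w1 - G (base_orbit x t) w2) \<le> L * norm (w1 - w2)"
  shows "norm (flow_field x t w1 - flow_field x t w2) \<le> cmod (Ln x) * ((onorm ((*v) A) + L) * norm (w1 - w2))"
proof -
  let ?g = "G (base_orbit x t) w1 - G (base_orbit x t) w2"
  have "norm (A *v (w1 - w2) + ?g) \<le> onorm ((*v) A) * norm (w1 - w2) + L * norm (w1 - w2)"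
    using norm_triangle_ineq[of "A *v (w1 - w2)" ?g] onorm[of "(*v) A" "w1 - w2"] assms by simp
  then have "norm (A *v (w1 - w2) + ?g) \<le> (onorm ((*v) A) + L) * norm (w1 - w2)"
    by (simp add: distrib_right)
  then show ?thesis
    unfolding flow_field_diff norm_scale_vec norm_minus_cancel by (rule mult_left_mono) simp
qed

lemma flow_field_monotone:
  assumes x: "x \<in> slit_disc2" and t: "t \<in> {0..1}" and w: "norm w1 \<le> \<rho>" "norm w2 \<le> \<rho>"
  shows "inner (flow_field x t w1 - flow_field x t w2) (w1 - w2) \<le> (\<delta>0 * ln (cmod x) + drift) * (norm (w1 - w2))\<^sup>2"
    and "(\<delta>1 * ln (cmod x) - drift) * (norm (w1 - w2))\<^sup>2 \<le> inner (flow_field x t w1 - flow_field x t w2) (w1 - w2)"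
proof -
  let ?d = "w1 - w2" and ?g = "G (base_orbit x t) w1 - G (base_orbit x t) w2"
  let ?W = "(norm ?d)\<^sup>2" and ?h = "herm (A *v ?d + ?g) ?d"
  have g: "norm ?g \<le> \<epsilon> * norm ?d"
    using G_small_lipschitz[OF norm_base_orbit_le[OF x t] w] .
  have "\<bar>Re (herm ?g ?d)\<bar> \<le> norm ?g * norm ?d"
    using abs_Re_le_cmod[of "herm ?g ?d"] norm_herm_le[of ?g ?d] by linarith
  also have "\<dots> \<le> \<epsilon> * norm ?d * norm ?d" using g by (rule mult_right_mono) simp
  finally have g_part: "\<bar>Re (herm ?g ?d)\<bar> \<le> \<epsilon> * ?W" by (simp add: power2_eq_square mult.assoc)
  have split: "Re ?h = Re (herm (A *v ?d) ?d) + Re (herm ?g ?d)"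
    by (simp only: herm_add_left plus_complex.sel)
  have A_up: "Re (herm (A *v ?d) ?d) \<le> - \<delta>0 * ?W - \<epsilon> * ?W"
    using A_upper[of ?d] by (simp add: algebra_simps)
  have A_lo: "- \<delta>1 * ?W + \<epsilon> * ?W \<le> Re (herm (A *v ?d) ?d)"
    using A_lower[of ?d] by (simp add: algebra_simps)
  have Re_h: "- \<delta>1 * ?W \<le> Re ?h" "Re ?h \<le> - \<delta>0 * ?W"
    unfolding split using A_up A_lo g_part by (simp_all add: abs_le_iff)
  have "norm (A *v ?d + ?g) \<le> onorm ((*v) A) * norm ?d + \<epsilon> * norm ?d"
    using norm_triangle_ineq[of "A *v ?d" ?g] onorm[of "(*v) A" ?d] g by simp
  then have "norm (A *v ?d + ?g) \<le> (onorm ((*v) A) + \<epsilon>) * norm ?d"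
    by (simp add: distrib_right)
  then have "cmod ?h \<le> ((onorm ((*v) A) + \<epsilon>) * norm ?d) * norm ?d"
    using norm_herm_le[of "A *v ?d + ?g" ?d] by (meson mult_right_mono norm_ge_zero order_trans)
  then have norm_h: "cmod ?h \<le> (onorm ((*v) A) + \<epsilon>) * ?W"
    by (simp add: power2_eq_square mult.assoc)
  have c: "- ln 2 < Re (- Ln x)" "\<bar>Im (- Ln x)\<bar> \<le> pi"
    using slit_disc2_Ln_bounds[OF x] by simp_all
  have inner_eq: "inner (flow_field x t w1 - flow_field x t w2) ?d = Re (- Ln x * ?h)"
    unfolding flow_field_diff by (rule inner_scale_vec_left)
  have Re_c: "Re (- Ln x) = - ln (cmod x)" using slit_disc2_Ln_bounds(1)[OF x] by simp
  note bounds = Re_mult_cone_bounds[OF Re_h norm_h c delta0_nonneg zero_le_power2]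
  show "inner (flow_field x t w1 - flow_field x t w2) ?d \<le> (\<delta>0 * ln (cmod x) + drift) * ?W"
    using bounds(1) unfolding inner_eq Re_c drift_def by (simp add: algebra_simps)
  show "(\<delta>1 * ln (cmod x) - drift) * ?W \<le> inner (flow_field x t w1 - flow_field x t w2) ?d"
    using bounds(2) unfolding inner_eq Re_c drift_def by (simp add: algebra_simps)
qed

lemma continuous_on_flow_field_comp:
  "continuous_on S y \<Longrightarrow> continuous_on S (\<lambda>s. flow_field x s (y s))"
  unfolding flow_field_def
  by (intro continuous_intros continuous_on_compose2[OF G_continuous, of S "\<lambda>s. (base_orbit x s, y s)", simplified]
      continuous_on_base_orbit) auto

lemma flow_field_inner_self_le:
  assumes x: "x \<in> slit_disc2" and t: "t \<in> {0..1}" and w: "norm w \<le> \<rho>"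
  shows "inner (flow_field x t w) w \<le> (\<delta>0 * ln 2 + drift) * (norm w)\<^sup>2"
proof -
  have "inner (flow_field x t w) w \<le> (\<delta>0 * ln (cmod x) + drift) * (norm w)\<^sup>2"
    using flow_field_monotone(1)[OF x t w, of 0] rho_pos by (simp add: flow_field_zero)
  also have "\<dots> \<le> (\<delta>0 * ln 2 + drift) * (norm w)\<^sup>2"
    using slit_disc2_Ln_bounds(2)[OF x] delta0_nonneg
    by (intro mult_right_mono add_right_mono mult_left_mono) auto
  finally show ?thesis .
qed

lemma truncated_flow_field_inner_self_le:
  assumes x: "x \<in> slit_disc2" and t: "t \<in> {0..1}"
  shows "inner (flow_field x t (radial_retraction \<rho> w)) w \<le> (\<delta>0 * ln 2 + drift) * (norm w)\<^sup>2"
proof -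
  define l where "l = \<rho> / max \<rho> (norm w)"
  have l: "0 < l" "l \<le> 1" and r: "radial_retraction \<rho> w = l *\<^sub>R w"
    using rho_pos by (auto simp: l_def radial_retraction_def)
  let ?R = "\<delta>0 * ln 2 + drift"
  have R: "0 \<le> ?R" using delta0_nonneg drift_nonneg by simp
  have "l * inner (flow_field x t (l *\<^sub>R w)) w = inner (flow_field x t (l *\<^sub>R w)) (l *\<^sub>R w)"
    by simp
  also have "\<dots> \<le> ?R * (norm (l *\<^sub>R w))\<^sup>2"
    using flow_field_inner_self_le[OF x t, of "l *\<^sub>R w"] norm_radial_retraction_le[OF rho_pos, of w] r by simp
  also have "\<dots> = l * (l * (?R * (norm w)\<^sup>2))"
    using l by (simp add: power2_eq_square mult_ac)
  finally have "inner (flow_field x t (l *\<^sub>R w)) w \<le> l * (?R * (norm w)\<^sup>2)"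
    using l by simp
  also have "\<dots> \<le> ?R * (norm w)\<^sup>2"
    using l R by (simp add: mult_left_le_one_le)
  finally show ?thesis unfolding r .
qed

lemma flow_solution_exists:
  assumes x: "x \<in> slit_disc2" and u: "norm u < radius"
  shows "\<exists>y. is_flow_sol A G x u y \<and> (\<forall>t\<in>{0..1}. norm (y t) \<le> \<rho>)"
proof -
  let ?F = "\<lambda>t w. flow_field x t (radial_retraction \<rho> w)"
  let ?K = "cmod (Ln x) * (onorm ((*v) A) + \<epsilon>) * 2 + 1"
  have K: "0 \<le> cmod (Ln x) * (onorm ((*v) A) + \<epsilon>) * 2"
    using onorm_pos_le[of "(*v) A"] eps_nonneg by simp
  interpret truncated: lipschitz_ode ?F ?K
  proof (unfold_locales)
    fix y :: "real \<Rightarrow> complex^'n" assume "continuous_on {0..1} y"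
    then show "continuous_on {0..1} (\<lambda>s. ?F s (y s))"
      by (intro continuous_on_flow_field_comp continuous_on_radial_retraction rho_pos)
  next
    fix t :: real and a b :: "complex^'n" assume t: "t \<in> {0..1}"
    let ?ra = "radial_retraction \<rho> a" and ?rb = "radial_retraction \<rho> b"
    have "norm (?F t a - ?F t b) \<le> cmod (Ln x) * ((onorm ((*v) A) + \<epsilon>) * norm (?ra - ?rb))"
      by (intro norm_flow_field_diff_le G_small_lipschitz norm_base_orbit_le[OF x t]
          norm_radial_retraction_le rho_pos)
    also have "\<dots> \<le> cmod (Ln x) * ((onorm ((*v) A) + \<epsilon>) * (2 * norm (a - b)))"
      using radial_retraction_lipschitz[OF rho_pos] onorm_pos_le[of "(*v) A"] eps_nonneg
      by (intro mult_left_mono) auto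
    also have "\<dots> \<le> ?K * norm (a - b)"
      by (simp add: algebra_simps)
    finally show "norm (?F t a - ?F t b) \<le> ?K * norm (a - b)" .
  qed (use K in simp)
  obtain y where y0: "y 0 = u"
    and y: "\<And>t. t \<in> {0..1} \<Longrightarrow> (y has_vector_derivative ?F t (y t)) (at t within {0..1})"
    using truncated.ode_solution_exists by blast
  have in_ball: "norm (y t) \<le> \<rho>" if t: "t \<in> {0..1}" for t
  proof -
    let ?R = "\<delta>0 * ln 2 + drift"
    have "norm (y t) \<le> exp (?R * (t - 0)) * norm (y 0)"
      by (rule gronwall_norm_upper[OF y truncated_flow_field_inner_self_le[OF x] t])
    also have "\<dots> \<le> exp ?R * radius"
      using t y0 u delta0_nonneg drift_nonneg
      by (intro mult_mono) (auto simp: mult_left_le)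
    also have "\<dots> = \<rho>"
      unfolding radius_def by (simp add: mult.left_commute flip: exp_add)
    finally show ?thesis .
  qed
  have "is_flow_sol A G x u y"
    unfolding is_flow_sol_iff using y0 y in_ball by (simp add: radial_retraction_eq_self)
  with in_ball show ?thesis by blast
qed

lemma flow_solution_unique:
  assumes x: "x \<in> slit_disc2" and y1: "is_flow_sol A G x u y1" and y2: "is_flow_sol A G x u y2"
    and t: "t \<in> {0..1}"
  shows "y1 t = y2 t"
proof -
  have d1: "\<And>s. s \<in> {0..1} \<Longrightarrow> (y1 has_vector_derivative flow_field x s (y1 s)) (at s within {0..1})"
    and d2: "\<And>s. s \<in> {0..1} \<Longrightarrow> (y2 has_vector_derivative flow_field x s (y2 s)) (at s within {0..1})"
    and "y1 0 = u" "y2 0 = u"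
    using y1 y2 by (auto simp: is_flow_sol_iff)
  then have start: "norm (y1 0 - y2 0) = 0" by simp
  have "compact (y1 ` {0..1} \<union> y2 ` {0..1})"
    using continuous_on_vector_derivative[OF d1] continuous_on_vector_derivative[OF d2]
    by (intro compact_Un compact_continuous_image) auto
  then obtain B where B: "0 < B" "\<And>z. z \<in> y1 ` {0..1} \<union> y2 ` {0..1} \<Longrightarrow> norm z \<le> B"
    by (auto dest!: compact_imp_bounded simp: bounded_pos)
  obtain L where L: "\<And>x u v. cmod x \<le> 2 \<Longrightarrow> norm u \<le> B \<Longrightarrow> norm v \<le> B \<Longrightarrow>
      norm (G x u - G x v) \<le> L * norm (u - v)"
    using G_locally_lipschitz[OF B(1)] by blast
  let ?Lf = "cmod (Ln x) * (onorm ((*v) A) + L)"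
  have der: "((\<lambda>s. y1 s - y2 s) has_vector_derivative flow_field x s (y1 s) - flow_field x s (y2 s)) (at s within {0..1})"
    if "s \<in> {0..1}" for s
    using d1[OF that] d2[OF that] by (rule has_vector_derivative_diff)
  have bound: "inner (flow_field x s (y1 s) - flow_field x s (y2 s)) (y1 s - y2 s) \<le> ?Lf * (norm (y1 s - y2 s))\<^sup>2"
    if s: "s \<in> {0..1}" for s
  proof -
    have "norm (flow_field x s (y1 s) - flow_field x s (y2 s)) \<le> ?Lf * norm (y1 s - y2 s)"
      using norm_flow_field_diff_le[OF L[OF norm_base_orbit_le[OF x s]]] B(2) s by (simp add: mult.assoc)
    then have "norm (flow_field x s (y1 s) - flow_field x s (y2 s)) * norm (y1 s - y2 s)
        \<le> ?Lf * norm (y1 s - y2 s) * norm (y1 s - y2 s)"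
      by (rule mult_right_mono) simp
    then show ?thesis
      using norm_cauchy_schwarz[of "flow_field x s (y1 s) - flow_field x s (y2 s)" "y1 s - y2 s"]
      by (simp add: power2_eq_square mult.assoc)
  qed
  have "norm (y1 t - y2 t) \<le> exp (?Lf * (t - 0)) * norm (y1 0 - y2 0)"
    using gronwall_norm_upper[OF der bound t] by simp
  then show ?thesis using start by simp
qed

lemma flow_map_eq:
  assumes x: "x \<in> slit_disc2" and y: "is_flow_sol A G x u y"
  shows "flow_map A G x u = y 1"
  unfolding flow_map_def
proof (rule the_equality)
  show "\<exists>y'. is_flow_sol A G x u y' \<and> y' 1 = y 1" using y by blast
  fix z assume "\<exists>y'. is_flow_sol A G x u y' \<and> y' 1 = z"
  then show "z = y 1" using flow_solution_unique[OF x _ y, of _ 1] by auto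
qed

lemma flow_solutions_dist_bounds:
  assumes x: "x \<in> slit_disc2" and y1: "is_flow_sol A G x u y1" and y2: "is_flow_sol A G x v y2"
    and ball: "\<And>t. t \<in> {0..1} \<Longrightarrow> norm (y1 t) \<le> \<rho>" "\<And>t. t \<in> {0..1} \<Longrightarrow> norm (y2 t) \<le> \<rho>"
  shows "norm (y1 1 - y2 1) \<le> exp drift * cmod x powr \<delta>0 * norm (u - v)"
    and "exp (- drift) * cmod x powr \<delta>1 * norm (u - v) \<le> norm (y1 1 - y2 1)"
proof -
  have der: "((\<lambda>s. y1 s - y2 s) has_vector_derivative flow_field x s (y1 s) - flow_field x s (y2 s)) (at s within {0..1})"
    if "s \<in> {0..1}" for s
    using y1 y2 that by (intro has_vector_derivative_diff) (auto simp: is_flow_sol_iff)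
  have start: "y1 0 - y2 0 = u - v" using y1 y2 by (simp add: is_flow_sol_iff)
  have nz: "x \<noteq> 0" using slit_disc2_Ln_bounds(1)[OF x] .
  have one: "(1::real) \<in> {0..1}" by simp
  have "norm (y1 1 - y2 1) \<le> exp ((\<delta>0 * ln (cmod x) + drift) * (1 - 0)) * norm (u - v)"
    using gronwall_norm_upper[OF der _ one] flow_field_monotone(1)[OF x] ball by (simp add: start)
  then show "norm (y1 1 - y2 1) \<le> exp drift * cmod x powr \<delta>0 * norm (u - v)"
    using nz by (simp add: powr_def exp_add mult_ac)
  have "exp ((\<delta>1 * ln (cmod x) - drift) * (1 - 0)) * norm (u - v) \<le> norm (y1 1 - y2 1)"
    using gronwall_norm_lower[OF der _ one] flow_field_monotone(2)[OF x] ball by (simp add: start)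
  then show "exp (- drift) * cmod x powr \<delta>1 * norm (u - v) \<le> norm (y1 1 - y2 1)"
    using nz by (simp add: powr_def exp_diff exp_minus field_simps)
qed

lemma flow_map_bi_lipschitz:
  assumes x: "x \<in> slit_disc2" and u: "norm u < radius" and v: "norm v < radius"
  shows "exp (- drift) * cmod x powr \<delta>1 * norm (u - v) \<le> norm (flow_map A G x u - flow_map A G x v)"
    and "norm (flow_map A G x u - flow_map A G x v) \<le> exp drift * cmod x powr \<delta>0 * norm (u - v)"
proof -
  obtain yu where yu: "is_flow_sol A G x u yu" "\<And>t. t \<in> {0..1} \<Longrightarrow> norm (yu t) \<le> \<rho>"
    using flow_solution_exists[OF x u] by blast
  obtain yv where yv: "is_flow_sol A G x v yv" "\<And>t. t \<in> {0..1} \<Longrightarrow> norm (yv t) \<le> \<rho>"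
    using flow_solution_exists[OF x v] by blast
  note bounds = flow_solutions_dist_bounds[OF x yu(1) yv(1) yu(2) yv(2)]
  show "exp (- drift) * cmod x powr \<delta>1 * norm (u - v) \<le> norm (flow_map A G x u - flow_map A G x v)"
    using bounds(2) by (simp add: flow_map_eq[OF x yu(1)] flow_map_eq[OF x yv(1)])
  show "norm (flow_map A G x u - flow_map A G x v) \<le> exp drift * cmod x powr \<delta>0 * norm (u - v)"
    using bounds(1) by (simp add: flow_map_eq[OF x yu(1)] flow_map_eq[OF x yv(1)])
qed

end

theorem lemma6p1:
  fixes A :: "complex^'n^'n"
    and G :: "complex \<Rightarrow> complex^'n \<Rightarrow> complex^'n"
    and \<delta>0 \<delta>1 \<epsilon> :: real
  assumes G: "poly_map_sq_ideal G"
    and pos: "\<delta>0 > 0" "\<delta>1 > 0" "\<epsilon> > 0"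
    and bounds: "\<And>y. y \<noteq> 0 \<Longrightarrow>
        (- \<delta>1 + \<epsilon>) * (norm y)\<^sup>2 < Re (herm (A *v y) y) \<and>
        Re (herm (A *v y) y) < (- \<delta>0 - \<epsilon>) * (norm y)\<^sup>2"
  shows "\<exists>r c0 c1. r > 0 \<and> c0 > 0 \<and> c1 > 0 \<and>
    (\<forall>x\<in>slit_disc2. \<forall>u. norm u < r \<longrightarrow> flow_defined A G x u) \<and>
    (\<forall>x\<in>slit_disc2. \<forall>u v. norm u < r \<longrightarrow> norm v < r \<longrightarrow>
        c1 * cmod x powr \<delta>1 * norm (u - v) \<le> norm (flow_map A G x u - flow_map A G x v) \<and>
        norm (flow_map A G x u - flow_map A G x v) \<le> c0 * cmod x powr \<delta>0 * norm (u - v))"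
proof -
  obtain \<rho> where \<rho>: "0 < \<rho>" "\<And>x u v. cmod x \<le> 2 \<Longrightarrow> norm u \<le> \<rho> \<Longrightarrow> norm v \<le> \<rho> \<Longrightarrow>
      norm (G x u - G x v) \<le> \<epsilon> * norm (u - v)"
    using poly_map_sq_ideal_small_lipschitz[OF G pos(3)] by blast
  have herm_0: "herm (A *v 0) 0 = 0" by (simp add: herm_def)
  interpret flow_setting A G \<delta>0 \<delta>1 \<epsilon> \<rho>
  proof
    show "Re (herm (A *v y) y) \<le> (- \<delta>0 - \<epsilon>) * (norm y)\<^sup>2" "(- \<delta>1 + \<epsilon>) * (norm y)\<^sup>2 \<le> Re (herm (A *v y) y)" for y
      using bounds[of y] herm_0 by (cases "y = 0"; simp)+
  qed (use pos \<rho> poly_map_sq_ideal_zero[OF G] continuous_on_poly_map_sq_ideal[OF G]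
      poly_map_sq_ideal_locally_lipschitz[OF G] in auto)
  have defined: "\<forall>x\<in>slit_disc2. \<forall>u. norm u < radius \<longrightarrow> flow_defined A G x u"
    unfolding flow_defined_def using flow_solution_exists by blast
  show ?thesis
    by (rule exI[of _ radius], rule exI[of _ "exp drift"], rule exI[of _ "exp (- drift)"])
      (use radius_pos defined flow_map_bi_lipschitz in auto)
qed

end
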